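(* Let $m\ge1$ be an integer and $\mu=\lfloor m/3\rfloor$. The group $\mathbb{Z}_m$ contains $\mu$ additively disjoint pairs if and only if $m\not\equiv 6\pmod{12}$. If $m\equiv 6\pmod{12}$, then the maximum number of additively disjoint pairs in $\mathbb{Z}_m$ is $\mu-1$.
   Context: For a finite abelian group $A$, a family of $n$ additively disjoint pairs in $A$ is a family $(a_i,b_i)\in A^2$, $1\le i\le n$, such that the $3n$ elements $a_1,b_1,\ldots,a_n,b_n,a_1+b_1,\ldots,a_n+b_n$ are pairwise distinct. $A$ is called maximally additively disjoint (MAD) if it contains $\lfloor |A|/3\rfloor$ additively disjoint pairs. *)

theory Defs
  imports Main
begin

text \<open>The cyclic group Z_m is modelled by the residues {0..<m} with addition modulo m.\<close>

definition add_disjoint_pairs :: "nat \<Rightarrow> (nat \<times> nat) list \<Rightarrow> bool" where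
  "add_disjoint_pairs m ps \<longleftrightarrow>
     (\<forall>(a, b) \<in> set ps. a < m \<and> b < m) \<and>
     distinct (map fst ps @ map snd ps @ map (\<lambda>(a, b). (a + b) mod m) ps)"

end

theory Submission
  imports Defs "HOL-Library.Multiset"
begin

(* Any n additively disjoint pairs in Z_m use 3n distinct residues, so n \<le> m div 3.  If 3n = m
   and m is even, every residue is used exactly once: the residues add up to m(m - 1)/2, while
   each triple a, b, (a + b) mod m has even sum because m is even; hence 4 divides m, which rules
   out m = 6 (mod 12).

   Conversely, let (a_i, b_i) with b_i - a_i = i (i = 1..n) be pairs with 2n distinct entries in
   {1..N}.  The triples (i, a_i + n, b_i + n) satisfy i + (a_i + n) = b_i + n and consist of 3n
   distinct numbers in {1..n + N}, which gives n additively disjoint pairs in Z_m once n + N \<le> m.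
   Skolem sequences (N = 2n, for n = 0, 1 mod 4) and hooked Skolem sequences (N = 2n + 1, for
   n = 2, 3 mod 4) settle every m except m = 3n with n = 2, 3 mod 4.  For n = 3 mod 4 a Rosa
   sequence, whose entries avoid n + 1, is shifted by n - 1 instead, and its pair of difference n
   is used backwards through -n = 2n (mod 3n); the 3n numbers then fill {1..3n}.  Finally, for
   m = 6 (mod 12) a Skolem sequence of order m/3 - 1 = 1 (mod 4) yields m/3 - 1 pairs. *)

lemma inj_on_mod_atLeastLessThan: "inj_on (\<lambda>v::nat. v mod m) {k..<k + m}"
proof -
  have "x = y" if range: "x \<in> {k..<k + m}" "y \<in> {k..<k + m}"
    and eq: "x mod m = y mod m" and le: "y \<le> x" for x y :: nat
  proof -
    obtain s where "x = y + m * s"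
      using mod_eq_nat1E[OF eq le] .
    moreover have "x - y < m"
      using range by auto
    ultimately show "x = y"
      by (cases s) auto
  qed
  then show ?thesis
    by (intro inj_onI) (metis nat_le_linear)
qed

lemma add_disjoint_pairs_of_triples:
  fixes f g h :: "'a \<Rightarrow> nat"
  assumes distinct: "distinct (map f xs @ map g xs @ map h xs)"
    and range: "set (map f xs @ map g xs @ map h xs) \<subseteq> {1..m}"
    and sum: "\<And>x. x \<in> set xs \<Longrightarrow> (f x + g x) mod m = h x mod m"
  shows "add_disjoint_pairs m (map (\<lambda>x. (f x mod m, g x mod m)) xs)"
proof -
  let ?ps = "map (\<lambda>x. (f x mod m, g x mod m)) xs"
  have "inj_on (\<lambda>v. v mod m) {1..m}"
    using inj_on_mod_atLeastLessThan[of m 1] by (simp add: atLeastLessThanSuc_atLeastAtMost)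
  then have distinct_mod: "distinct (map (\<lambda>v. v mod m) (map f xs @ map g xs @ map h xs))"
    using distinct range by (simp only: distinct_map) (blast intro: inj_on_subset)
  have residues: "map fst ?ps @ map snd ?ps @ map (\<lambda>(a, b). (a + b) mod m) ?ps
      = map (\<lambda>v. v mod m) (map f xs @ map g xs @ map h xs)"
    using sum by (simp add: mod_add_eq)
  have "\<forall>(a, b) \<in> set ?ps. a < m \<and> b < m"
    using range by fastforce
  then show ?thesis
    unfolding add_disjoint_pairs_def residues using distinct_mod by blast
qed

lemma add_disjoint_pairs_length_le:
  assumes "add_disjoint_pairs m ps"
  shows "3 * length ps \<le> m"
proof -
  let ?vs = "map fst ps @ map snd ps @ map (\<lambda>(a, b). (a + b) mod m) ps"
  have "distinct ?vs" "set ?vs \<subseteq> {..<m}"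
    using assms unfolding add_disjoint_pairs_def by auto
  then have "length ?vs \<le> card {..<m}"
    by (metis card_mono distinct_card finite_lessThan)
  then show ?thesis
    by simp
qed

lemma add_disjoint_pairs_cover_imp_4_dvd:
  assumes "add_disjoint_pairs m ps" "3 * length ps = m" "even m"
  shows "4 dvd m"
proof -
  let ?vs = "map fst ps @ map snd ps @ map (\<lambda>(a, b). (a + b) mod m) ps"
  have "distinct ?vs" "set ?vs \<subseteq> {..<m}"
    using assms(1) unfolding add_disjoint_pairs_def by auto
  moreover have "card (set ?vs) = m"
    using distinct_card[OF \<open>distinct ?vs\<close>] assms(2) by simp
  ultimately have "set ?vs = {0..<m}"
    by (simp add: card_subset_eq atLeast0LessThan)
  then have "m * (m - 1) div 2 = sum_list ?vs"
    using sum_list_distinct_conv_sum_set[OF \<open>distinct ?vs\<close>, of id] Sum_Ico_nat[of 0 m] by simp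
  also have "\<dots> = (\<Sum>p\<leftarrow>ps. fst p + snd p + (fst p + snd p) mod m)"
    by (induction ps) (auto simp: case_prod_beta)
  finally have sum_eq: "m * (m - 1) div 2 = (\<Sum>p\<leftarrow>ps. fst p + snd p + (fst p + snd p) mod m)" .
  have "even (s + s mod m)" for s :: nat
  proof -
    have "s mod m mod 2 = s mod 2"
      using \<open>even m\<close> by (simp add: mod_mod_cancel)
    then show ?thesis
      by (metis even_add even_iff_mod_2_eq_zero)
  qed
  then have "even (\<Sum>p\<leftarrow>ps. fst p + snd p + (fst p + snd p) mod m)"
    by (induction ps) auto
  moreover obtain k where "m = 2 * k"
    using \<open>even m\<close> ..
  ultimately have "even (k * (2 * k - 1))"
    using sum_eq by simp
  then have "even k"
    by (cases k) auto
  then show ?thesis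
    using \<open>m = 2 * k\<close> by (auto elim!: evenE)
qed

(* L lists the pairs (a_i, b_i) of a Skolem-type sequence of order n = length L: the differences
   b_i - a_i are n distinct numbers in {1..n}, hence exactly 1, ..., n.  The support S is
   {1..2n} for a Skolem sequence, {1..2n+1} - {2n} for a hooked Skolem sequence and
   {1..2n+1} - {n+1} for a Rosa sequence. *)
definition skolem_pairs :: "(nat \<times> nat) list \<Rightarrow> nat set \<Rightarrow> bool" where
  "skolem_pairs L S \<longleftrightarrow>
     distinct (map fst L @ map snd L) \<and> set (map fst L @ map snd L) \<subseteq> S \<and>
     (\<forall>(a, b) \<in> set L. a < b \<and> b - a \<le> length L) \<and> distinct (map (\<lambda>(a, b). b - a) L)"

lemma skolem_pairsD:
  assumes "skolem_pairs L S" "(a, b) \<in> set L"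
  shows "a < b" "b - a \<le> length L" "a \<in> S" "b \<in> S"
proof -
  have "a \<in> set (map fst L @ map snd L)" "b \<in> set (map fst L @ map snd L)"
    using assms(2) by force+
  then show "a \<in> S" "b \<in> S"
    using assms(1) unfolding skolem_pairs_def by auto
  show "a < b" "b - a \<le> length L"
    using assms unfolding skolem_pairs_def by auto
qed

lemma distinct_differences_skolem_pairs:
  assumes "skolem_pairs L S"
  shows "distinct (map (\<lambda>p. snd p - fst p) L)"
  using assms unfolding skolem_pairs_def by (simp add: case_prod_beta')

lemma distinct_shifted_entries:
  assumes "skolem_pairs L S"
  shows "distinct (map (\<lambda>p. fst p + k) L @ map (\<lambda>p. snd p + k) L)"
proof -
  have "distinct (map (\<lambda>v. v + k) (map fst L @ map snd L))"
    using assms unfolding skolem_pairs_def by (simp only: distinct_map) (simp add: inj_on_def)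
  then show ?thesis
    by (simp only: map_append map_map comp_def)
qed

lemma mset_reoriented_shifted_entries:
  "mset (map (\<lambda>p. (if P p then snd p else fst p) + k) L
          @ map (\<lambda>p. (if P p then fst p else snd p) + k) L)
    = mset (map (\<lambda>p. fst p + k) L @ map (\<lambda>p. snd p + k) L)"
  by (induction L) auto

lemma add_disjoint_pairs_of_skolem_pairs:
  assumes L: "skolem_pairs L S" and "S \<subseteq> {1..N}" and "length L + N \<le> m"
  shows "\<exists>ps. add_disjoint_pairs m ps \<and> length ps = length L"
proof -
  let ?n = "length L"
  let ?f = "\<lambda>p. snd p - fst p"
  let ?g = "\<lambda>p. fst p + ?n"
  let ?h = "\<lambda>p. snd p + ?n"
  have bounds: "fst p < snd p" "snd p - fst p \<le> ?n" "1 \<le> fst p" "snd p \<le> N" if "p \<in> set L" for p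
    using skolem_pairsD[OF L, of "fst p" "snd p"] that assms(2) by force+
  have "?f p < ?g q \<and> ?f p < ?h q" if "p \<in> set L" "q \<in> set L" for p q
    using bounds[OF that(1)] bounds[OF that(2)] by linarith
  then have "distinct (map ?f L @ map ?g L @ map ?h L)"
    using distinct_differences_skolem_pairs[OF L] distinct_shifted_entries[OF L]
    by (fastforce simp: distinct_append)
  moreover have "set (map ?f L @ map ?g L @ map ?h L) \<subseteq> {1..m}"
    using bounds assms(3) by fastforce
  moreover have "(?f p + ?g p) mod m = ?h p mod m" if "p \<in> set L" for p
    using bounds(1)[OF that] by simp
  ultimately have "add_disjoint_pairs m (map (\<lambda>p. (?f p mod m, ?g p mod m)) L)"
    by (rule add_disjoint_pairs_of_triples)
  then show ?thesis
    by auto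
qed

lemma distinct_differences_long_doubled:
  assumes L: "skolem_pairs L S" and n: "length L = n" "n \<noteq> 0"
  defines "f \<equiv> \<lambda>p. if snd p - fst p = n then 2 * n else snd p - fst p"
  shows "distinct (map f L)" "set (map f L) \<subseteq> {1..<n} \<union> {2 * n}"
proof -
  have bounds: "fst p < snd p" "snd p - fst p \<le> n" if "p \<in> set L" for p
    using skolem_pairsD[OF L, of "fst p" "snd p"] that n by simp_all
  have "distinct L" "inj_on (\<lambda>p. snd p - fst p) (set L)"
    using distinct_differences_skolem_pairs[OF L] by (simp_all add: distinct_map)
  moreover have "snd p - fst p = snd q - fst q" if "p \<in> set L" "q \<in> set L" "f p = f q" for p q
    using bounds(2)[OF that(1)] bounds(2)[OF that(2)] that(3) n(2) by (auto simp: f_def split: if_splits)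
  ultimately show "distinct (map f L)"
    unfolding distinct_map inj_on_def by blast
  show "set (map f L) \<subseteq> {1..<n} \<union> {2 * n}"
  proof
    fix v assume "v \<in> set (map f L)"
    then obtain p where "p \<in> set L" "v = f p"
      by auto
    then show "v \<in> {1..<n} \<union> {2 * n}"
      using bounds[of p] by (auto simp: f_def)
  qed
qed

lemma add_disjoint_pairs_of_rosa_pairs:
  assumes L: "skolem_pairs L ({1..2 * n + 1} - {n + 1})" and n: "length L = n"
  shows "\<exists>ps. add_disjoint_pairs (3 * n) ps \<and> length ps = n"
proof (cases "n = 0")
  case True
  then show ?thesis
    by (auto simp: add_disjoint_pairs_def)
next
  case False
  define long where "long p \<longleftrightarrow> snd p - fst p = n" for p :: "nat \<times> nat"
  define f where "f p = (if long p then 2 * n else snd p - fst p)" for p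
  define g where "g p = (if long p then snd p else fst p) + (n - 1)" for p
  define h where "h p = (if long p then fst p else snd p) + (n - 1)" for p
  have f: "distinct (map f L)" "set (map f L) \<subseteq> {1..<n} \<union> {2 * n}"
    using distinct_differences_long_doubled[OF L n False] unfolding f_def long_def by simp_all
  have gh_mset: "mset (map g L @ map h L)
      = mset (map (\<lambda>p. fst p + (n - 1)) L @ map (\<lambda>p. snd p + (n - 1)) L)"
    unfolding g_def h_def by (rule mset_reoriented_shifted_entries)
  then have gh_distinct: "distinct (map g L @ map h L)"
    using distinct_shifted_entries[OF L] mset_eq_imp_distinct_iff by blast
  have "set (map g L @ map h L) \<subseteq> {n..3 * n} - {2 * n}"
    unfolding mset_eq_setD[OF gh_mset] using skolem_pairsD(3,4)[OF L] by fastforce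
  moreover have "({1..<n} \<union> {2 * n}) \<inter> ({n..3 * n} - {2 * n}) = {}"
    by auto
  ultimately have "distinct (map f L @ map g L @ map h L)"
    using f gh_distinct by (simp only: distinct_append[of "map f L"]) blast
  moreover have "set (map f L @ map g L @ map h L) \<subseteq> {1..3 * n}"
    using f(2) \<open>set (map g L @ map h L) \<subseteq> _\<close> False by auto
  moreover have "(f p + g p) mod (3 * n) = h p mod (3 * n)" if "p \<in> set L" for p
  proof -
    have "fst p < snd p"
      using skolem_pairsD(1)[OF L, of "fst p" "snd p"] that by simp
    then have "f p + g p = h p + (if long p then 3 * n else 0)"
      unfolding f_def g_def h_def long_def by auto
    then show ?thesis
      by simp
  qed
  ultimately have "add_disjoint_pairs (3 * n) (map (\<lambda>p. (f p mod (3 * n), g p mod (3 * n))) L)"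
    by (rule add_disjoint_pairs_of_triples)
  then show ?thesis
    using n by auto
qed

definition nested_pairs :: "nat \<Rightarrow> nat \<Rightarrow> nat \<Rightarrow> (nat \<times> nat) list" where
  "nested_pairs a b k = map (\<lambda>r. (a + r, b - r)) [0..<k]"

definition skolem_0 :: "nat \<Rightarrow> (nat \<times> nat) list" where
  "skolem_0 t = nested_pairs 1 (4 * t + 7) (2 * t + 3) @ nested_pairs (4 * t + 8) (8 * t + 15) (t + 2)
     @ nested_pairs (5 * t + 12) (7 * t + 13) t
     @ [(5 * t + 10, 5 * t + 11), (6 * t + 13, 8 * t + 16), (2 * t + 4, 6 * t + 12)]"

definition skolem_1 :: "nat \<Rightarrow> (nat \<times> nat) list" where
  "skolem_1 t = nested_pairs 1 (4 * t + 3) (2 * t + 1) @ nested_pairs (4 * t + 4) (8 * t + 9) t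
     @ nested_pairs (5 * t + 4) (7 * t + 7) (t + 1)
     @ [(7 * t + 8, 7 * t + 9), (6 * t + 5, 8 * t + 10), (2 * t + 2, 6 * t + 6)]"

definition hooked_2 :: "nat \<Rightarrow> (nat \<times> nat) list" where
  "hooked_2 t = nested_pairs 1 (4 * t + 5) (2 * t + 2) @ nested_pairs (4 * t + 6) (8 * t + 11) (t + 1)
     @ nested_pairs (5 * t + 9) (7 * t + 10) t
     @ [(5 * t + 7, 5 * t + 8), (6 * t + 10, 8 * t + 13), (2 * t + 3, 6 * t + 9)]"

definition hooked_3 :: "nat \<Rightarrow> (nat \<times> nat) list" where
  "hooked_3 t = nested_pairs 1 (4 * t + 5) (2 * t + 2) @ nested_pairs (4 * t + 6) (8 * t + 13) t
     @ nested_pairs (5 * t + 6) (7 * t + 11) (t + 2)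
     @ [(7 * t + 12, 7 * t + 13), (6 * t + 8, 8 * t + 15), (2 * t + 3, 6 * t + 9)]"

definition rosa_3 :: "nat \<Rightarrow> (nat \<times> nat) list" where
  "rosa_3 t = nested_pairs 1 (4 * t + 7) (2 * t + 3) @ nested_pairs (4 * t + 9) (8 * t + 14) t
     @ nested_pairs (5 * t + 9) (7 * t + 12) (t + 1)
     @ [(7 * t + 13, 7 * t + 14), (6 * t + 10, 8 * t + 15), (2 * t + 4, 6 * t + 11)]"

lemma length_skolem_families [simp]:
  "length (skolem_0 t) = 4 * t + 8" "length (skolem_1 t) = 4 * t + 5"
  "length (hooked_2 t) = 4 * t + 6" "length (hooked_3 t) = 4 * t + 7" "length (rosa_3 t) = 4 * t + 7"
  by (simp_all add: skolem_0_def skolem_1_def hooked_2_def hooked_3_def rosa_3_def nested_pairs_def)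

lemma skolem_pairs_skolem_0: "skolem_pairs (skolem_0 t) {1..2 * (4 * t + 8)}"
  unfolding skolem_pairs_def skolem_0_def nested_pairs_def
  by (auto simp: distinct_append distinct_map inj_on_def; presburger)

lemma skolem_pairs_skolem_1: "skolem_pairs (skolem_1 t) {1..2 * (4 * t + 5)}"
  unfolding skolem_pairs_def skolem_1_def nested_pairs_def
  by (auto simp: distinct_append distinct_map inj_on_def; presburger)

lemma skolem_pairs_hooked_2: "skolem_pairs (hooked_2 t) ({1..2 * (4 * t + 6) + 1} - {2 * (4 * t + 6)})"
  unfolding skolem_pairs_def hooked_2_def nested_pairs_def
  by (auto simp: distinct_append distinct_map inj_on_def; presburger)

lemma skolem_pairs_hooked_3: "skolem_pairs (hooked_3 t) ({1..2 * (4 * t + 7) + 1} - {2 * (4 * t + 7)})"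
  unfolding skolem_pairs_def hooked_3_def nested_pairs_def
  by (auto simp: distinct_append distinct_map inj_on_def; presburger)

lemma skolem_pairs_rosa_3: "skolem_pairs (rosa_3 t) ({1..2 * (4 * t + 7) + 1} - {4 * t + 7 + 1})"
  unfolding skolem_pairs_def rosa_3_def nested_pairs_def
  by (auto simp: distinct_append distinct_map inj_on_def; presburger)

lemma skolem_sequence_exists:
  assumes "n mod 4 = 0 \<or> n mod 4 = 1"
  shows "\<exists>L. length L = n \<and> skolem_pairs L {1..2 * n}"
proof -
  have "n = 0 \<or> n = 1 \<or> n = 4 \<or> (\<exists>t. n = 4 * t + 5) \<or> (\<exists>t. n = 4 * t + 8)"
    using assms by presburger
  then consider "n = 0" | "n = 1" | "n = 4" | t where "n = 4 * t + 5" | t where "n = 4 * t + 8"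
    by blast
  then show ?thesis
  proof cases
    case 1
    then show ?thesis by (intro exI[of _ "[]"]) (simp add: skolem_pairs_def)
  next
    case 2
    then show ?thesis by (intro exI[of _ "[(1, 2)]"]) (simp add: skolem_pairs_def)
  next
    case 3
    then show ?thesis by (intro exI[of _ "[(1, 5), (3, 6), (2, 4), (7, 8)]"]) (simp add: skolem_pairs_def)
  next
    case (4 t)
    then show ?thesis using skolem_pairs_skolem_1[of t] by (intro exI[of _ "skolem_1 t"]) simp
  next
    case (5 t)
    then show ?thesis using skolem_pairs_skolem_0[of t] by (intro exI[of _ "skolem_0 t"]) simp
  qed
qed

lemma hooked_skolem_sequence_exists:
  assumes "n mod 4 = 2 \<or> n mod 4 = 3"
  shows "\<exists>L. length L = n \<and> skolem_pairs L ({1..2 * n + 1} - {2 * n})"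
proof -
  have "n = 2 \<or> n = 3 \<or> (\<exists>t. n = 4 * t + 6) \<or> (\<exists>t. n = 4 * t + 7)"
    using assms by presburger
  then consider "n = 2" | "n = 3" | t where "n = 4 * t + 6" | t where "n = 4 * t + 7"
    by blast
  then show ?thesis
  proof cases
    case 1
    then show ?thesis by (intro exI[of _ "[(3, 5), (1, 2)]"]) (simp add: skolem_pairs_def)
  next
    case 2
    then show ?thesis by (intro exI[of _ "[(1, 4), (5, 7), (2, 3)]"]) (simp add: skolem_pairs_def)
  next
    case (3 t)
    then show ?thesis using skolem_pairs_hooked_2[of t] by (intro exI[of _ "hooked_2 t"]) simp
  next
    case (4 t)
    then show ?thesis using skolem_pairs_hooked_3[of t] by (intro exI[of _ "hooked_3 t"]) simp
  qed
qed

lemma rosa_sequence_exists: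
  assumes "n mod 4 = 3"
  shows "\<exists>L. length L = n \<and> skolem_pairs L ({1..2 * n + 1} - {n + 1})"
proof -
  have "n = 3 \<or> (\<exists>t. n = 4 * t + 7)"
    using assms by presburger
  then consider "n = 3" | t where "n = 4 * t + 7"
    by blast
  then show ?thesis
  proof cases
    case 1
    then show ?thesis by (intro exI[of _ "[(2, 5), (1, 3), (6, 7)]"]) (simp add: skolem_pairs_def)
  next
    case (2 t)
    then show ?thesis using skolem_pairs_rosa_3[of t] by (intro exI[of _ "rosa_3 t"]) simp
  qed
qed

lemma add_disjoint_pairs_of_skolem_sequence:
  assumes "n mod 4 = 0 \<or> n mod 4 = 1" "3 * n \<le> m"
  shows "\<exists>ps. add_disjoint_pairs m ps \<and> length ps = n"
proof -
  obtain L where "length L = n" "skolem_pairs L {1..2 * n}"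
    using skolem_sequence_exists[OF assms(1)] by blast
  then show ?thesis
    using add_disjoint_pairs_of_skolem_pairs[of L "{1..2 * n}" "2 * n" m] assms(2) by simp
qed

lemma add_disjoint_pairs_of_hooked_skolem_sequence:
  assumes "n mod 4 = 2 \<or> n mod 4 = 3" "3 * n < m"
  shows "\<exists>ps. add_disjoint_pairs m ps \<and> length ps = n"
proof -
  obtain L where "length L = n" "skolem_pairs L ({1..2 * n + 1} - {2 * n})"
    using hooked_skolem_sequence_exists[OF assms(1)] by blast
  then show ?thesis
    using add_disjoint_pairs_of_skolem_pairs[of L "{1..2 * n + 1} - {2 * n}" "2 * n + 1" m] assms(2)
    by auto
qed

lemma add_disjoint_pairs_of_rosa_sequence:
  assumes "n mod 4 = 3"
  shows "\<exists>ps. add_disjoint_pairs (3 * n) ps \<and> length ps = n"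
  using rosa_sequence_exists[OF assms] add_disjoint_pairs_of_rosa_pairs by blast

lemma add_disjoint_pairs_maximal_exists:
  assumes "m mod 12 \<noteq> 6"
  shows "\<exists>ps. add_disjoint_pairs m ps \<and> length ps = m div 3"
proof -
  define n where "n = m div 3"
  have "3 * n \<le> m"
    unfolding n_def by simp
  have "(n mod 4 = 0 \<or> n mod 4 = 1) \<or> ((n mod 4 = 2 \<or> n mod 4 = 3) \<and> 3 * n < m)
      \<or> (n mod 4 = 3 \<and> m = 3 * n)"
    using assms unfolding n_def by presburger
  then consider "n mod 4 = 0 \<or> n mod 4 = 1" | "n mod 4 = 2 \<or> n mod 4 = 3" "3 * n < m"
    | "n mod 4 = 3" "m = 3 * n"
    by blast
  then have "\<exists>ps. add_disjoint_pairs m ps \<and> length ps = n"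
  proof cases
    case 1
    then show ?thesis using \<open>3 * n \<le> m\<close> by (rule add_disjoint_pairs_of_skolem_sequence)
  next
    case 2
    then show ?thesis by (rule add_disjoint_pairs_of_hooked_skolem_sequence)
  next
    case 3
    then show ?thesis using add_disjoint_pairs_of_rosa_sequence by simp
  qed
  then show ?thesis
    unfolding n_def .
qed

theorem theorem9p2:
  fixes m :: nat
  assumes "m \<ge> 1"
  shows "((\<exists>ps. add_disjoint_pairs m ps \<and> length ps = m div 3) \<longleftrightarrow> m mod 12 \<noteq> 6) \<and>
         (m mod 12 = 6 \<longrightarrow>
           (\<exists>ps. add_disjoint_pairs m ps \<and> length ps = m div 3 - 1) \<and>
           (\<forall>ps. add_disjoint_pairs m ps \<longrightarrow> length ps \<le> m div 3 - 1))"
proof -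
  have upper: "length ps \<le> m div 3" if "add_disjoint_pairs m ps" for ps
    using add_disjoint_pairs_length_le[OF that] by (simp add: less_eq_div_iff_mult_less_eq mult.commute)
  have not_maximal: "length ps \<noteq> m div 3" if "m mod 12 = 6" "add_disjoint_pairs m ps" for ps
  proof -
    have "3 * (m div 3) = m \<and> even m \<and> \<not> 4 dvd m"
      using that(1) by presburger
    then show ?thesis
      using add_disjoint_pairs_cover_imp_4_dvd[OF that(2)] by auto
  qed
  have almost_maximal: "\<exists>ps. add_disjoint_pairs m ps \<and> length ps = m div 3 - 1" if "m mod 12 = 6"
  proof -
    have "m div 3 = 4 * (m div 12) + 2"
      using that by presburger
    then have "(m div 3 - 1) mod 4 = 1"
      by simp
    then show ?thesis
      by (intro add_disjoint_pairs_of_skolem_sequence) simp_all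
  qed
  have "length ps \<le> m div 3 - 1" if "m mod 12 = 6" "add_disjoint_pairs m ps" for ps
    using upper[OF that(2)] not_maximal[OF that] by linarith
  then show ?thesis
    using add_disjoint_pairs_maximal_exists not_maximal almost_maximal by blast
qed

end
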